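(* Let $k\in\{1,\dots,d\}$ and $p\ge 1$. Then the function $R:\mathbb{P}_d\to\mathbb{R}$ defined by $R(X)=\left|\sum_{j=1}^k\lambda_j^{\downarrow}(X)\right|^p$ is geodesically convex on $\mathbb{P}_d$.
   Context: $\mathbb{P}_d$ denotes the set of real symmetric $d\times d$ positive definite matrices, equipped with the affine-invariant Riemannian metric $\langle U,V\rangle_X=\operatorname{tr}(X^{-1}UX^{-1}V)$, whose geodesic from $A$ to $B$ is $\gamma(t)=A^{1/2}(A^{-1/2}BA^{-1/2})^tA^{1/2}$, $t\in[0,1]$. A function $f$ on $\mathbb{P}_d$ is geodesically convex if $t\mapsto f(\gamma(t))$ is convex on $[0,1]$ for every such geodesic. $\lambda_1^{\downarrow}(X)\ge\dots\ge\lambda_d^{\downarrow}(X)$ denote the eigenvalues of $X$ in decreasing order. *)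

theory Defs
  imports "Jordan_Normal_Form.Char_Poly" "HOL-Analysis.Convex"
begin

definition pd_mat :: "nat \<Rightarrow> real mat \<Rightarrow> bool" where
  "pd_mat d A \<longleftrightarrow> A \<in> carrier_mat d d \<and> transpose_mat A = A \<and>
     (\<forall>x \<in> carrier_vec d. x \<noteq> 0\<^sub>v d \<longrightarrow> x \<bullet> (A *\<^sub>v x) > 0)"

definition mat_powr :: "real mat \<Rightarrow> real \<Rightarrow> real mat" where
  "mat_powr M t = (let n = dim_row M in
     SOME P. \<exists>Q l. Q \<in> carrier_mat n n \<and> transpose_mat Q * Q = 1\<^sub>m n \<and>
        M = Q * mat_diag n l * transpose_mat Q \<and>
        P = Q * mat_diag n (\<lambda>i. l i powr t) * transpose_mat Q)"

definition geod :: "real mat \<Rightarrow> real mat \<Rightarrow> real \<Rightarrow> real mat" where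
  "geod A B t = mat_powr A (1/2) *
     mat_powr (mat_powr A (-1/2) * B * mat_powr A (-1/2)) t * mat_powr A (1/2)"

definition geod_convex :: "nat \<Rightarrow> (real mat \<Rightarrow> real) \<Rightarrow> bool" where
  "geod_convex d f \<longleftrightarrow>
     (\<forall>A B. pd_mat d A \<longrightarrow> pd_mat d B \<longrightarrow> convex_on {0..1} (\<lambda>t. f (geod A B t)))"

text \<open>Eigenvalues (with algebraic multiplicity) in decreasing order; for real symmetric
  matrices the characteristic polynomial splits over the reals.\<close>
definition eigvals_desc :: "real mat \<Rightarrow> real list" where
  "eigvals_desc X = (THE xs. sorted_wrt (\<ge>) xs \<and> char_poly X = (\<Prod>a\<leftarrow>xs. [:- a, 1:]))"

definition eig_dec :: "real mat \<Rightarrow> nat \<Rightarrow> real" where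
  "eig_dec X j = eigvals_desc X ! (j - 1)"

end

(* Ky Fan's maximum principle: for symmetric X the sum of the k largest eigenvalues equals the
   maximum, over orthonormal W, of the sum of the first k diagonal entries of W^T X W.
   Along the geodesic, gamma(t) = A^(1/2) Q diag(l^t) Q^T A^(1/2), where Q diag(l) Q^T is a
   spectral decomposition of A^(-1/2) B A^(-1/2). For fixed W the Ky Fan trace of gamma(t) is
   therefore a nonnegative combination of the convex functions t -> l_j^t, so the eigenvalue sum
   is a pointwise maximum of convex functions: it is convex and nonnegative. Composing with the
   convex nondecreasing map x -> x^p on [0, oo) gives the claim. *)

theory Submission
  imports Defs "Jordan_Normal_Form.Schur_Decomposition" "HOL-Combinatorics.Permutations"
begin

section \<open>Orthonormal matrices and conjugated diagonal matrices\<close>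

definition orthonormal_mat :: "nat \<Rightarrow> real mat \<Rightarrow> bool" where
  "orthonormal_mat n Q \<longleftrightarrow> Q \<in> carrier_mat n n \<and> transpose_mat Q * Q = 1\<^sub>m n"

lemma orthonormal_mat_carrier: "orthonormal_mat n Q \<Longrightarrow> Q \<in> carrier_mat n n"
  unfolding orthonormal_mat_def by simp

lemma orthonormal_mat_left_inverse: "orthonormal_mat n Q \<Longrightarrow> transpose_mat Q * Q = 1\<^sub>m n"
  unfolding orthonormal_mat_def by simp

lemma orthonormal_mat_right_inverse: "orthonormal_mat n Q \<Longrightarrow> Q * transpose_mat Q = 1\<^sub>m n"
  using mat_mult_left_right_inverse[of "transpose_mat Q" n Q] unfolding orthonormal_mat_def by auto

lemma orthonormal_mat_one: "orthonormal_mat n (1\<^sub>m n)"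
  unfolding orthonormal_mat_def by simp

lemma orthonormal_mat_transpose: "orthonormal_mat n Q \<Longrightarrow> orthonormal_mat n (transpose_mat Q)"
  using orthonormal_mat_right_inverse unfolding orthonormal_mat_def by auto

lemma orthonormal_mat_mult:
  assumes Q: "orthonormal_mat n Q" and W: "orthonormal_mat n W"
  shows "orthonormal_mat n (Q * W)"
proof -
  have QW: "Q \<in> carrier_mat n n" "W \<in> carrier_mat n n"
    using Q W by (auto dest: orthonormal_mat_carrier)
  have "transpose_mat (Q * W) * (Q * W) = transpose_mat W * (transpose_mat Q * Q) * W"
    using QW by (simp add: transpose_mult[of _ n n] assoc_mult_mat[of _ n n _ n _ n])
  also have "\<dots> = 1\<^sub>m n"
    using QW orthonormal_mat_left_inverse[OF Q] orthonormal_mat_left_inverse[OF W] by simp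
  finally show ?thesis using QW unfolding orthonormal_mat_def by simp
qed

lemma transpose_mult3:
  fixes A :: "'a :: comm_semiring_0 mat"
  assumes "X \<in> carrier_mat n n" "A \<in> carrier_mat n n" "Y \<in> carrier_mat n n"
  shows "transpose_mat (X * A * Y) = transpose_mat Y * transpose_mat A * transpose_mat X"
  using assms by (simp add: transpose_mult[of _ n n _ n] assoc_mult_mat[of _ n n _ n _ n] mult_carrier_mat[of _ n n _ n])

lemma sym_mat_entry:
  "transpose_mat A = A \<Longrightarrow> i < dim_row A \<Longrightarrow> j < dim_col A \<Longrightarrow> A $$ (j,i) = A $$ (i,j)"
  by (metis index_transpose_mat(1))

lemma transpose_congruence:
  fixes A :: "'a :: comm_semiring_0 mat"
  assumes "A \<in> carrier_mat n n" "W \<in> carrier_mat n n" "transpose_mat A = A"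
  shows "transpose_mat (transpose_mat W * A * W) = transpose_mat W * A * W"
  using assms transpose_mult3[of "transpose_mat W" n A W] by simp

lemma dim_mat_diag [simp]: "dim_row (mat_diag n f) = n" "dim_col (mat_diag n f) = n"
  unfolding mat_diag_def by simp_all

lemma conj_diag_mult:
  fixes W F :: "'a :: comm_ring_1 mat"
  assumes "W \<in> carrier_mat n n" "F \<in> carrier_mat n n"
  shows "W * (F * mat_diag n l * transpose_mat F) * transpose_mat W
       = (W * F) * mat_diag n l * transpose_mat (W * F)"
  using assms by (simp add: transpose_mult[of _ n n _ n] assoc_mult_mat[of _ n n _ n _ n] mult_carrier_mat[of _ n n _ n])

lemma conj_diag_entry:
  assumes Q: "Q \<in> carrier_mat n n" and i: "i < n" and j: "j < n"
  shows "(Q * mat_diag n l * transpose_mat Q) $$ (i,j) = (\<Sum>k<n. Q $$ (i,k) * l k * Q $$ (j,k))"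
  using Q i j by (simp add: mat_diag_mult_right[OF Q] scalar_prod_def atLeast0LessThan)

lemma transpose_conj_diag:
  fixes Q :: "'a :: comm_ring_1 mat"
  assumes Q: "Q \<in> carrier_mat n n"
  shows "transpose_mat (Q * mat_diag n l * transpose_mat Q) = Q * mat_diag n l * transpose_mat Q"
proof (rule eq_matI)
  fix i j assume "i < dim_row (Q * mat_diag n l * transpose_mat Q)" "j < dim_col (Q * mat_diag n l * transpose_mat Q)"
  with Q have ij: "i < n" "j < n" by auto
  then show "transpose_mat (Q * mat_diag n l * transpose_mat Q) $$ (i, j) = (Q * mat_diag n l * transpose_mat Q) $$ (i, j)"
    using Q conj_diag_entry[OF Q ij] conj_diag_entry[OF Q ij(2,1)] by (simp add: ac_simps)
qed (use Q in auto)

lemma congruence_diag_entry: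
  fixes R :: "'a :: comm_ring_1 mat"
  assumes R: "R \<in> carrier_mat n n" and i: "i < n"
  shows "(transpose_mat R * mat_diag n g * R) $$ (i,i) = (\<Sum>j<n. (R $$ (j,i))\<^sup>2 * g j)"
  using conj_diag_entry[of "transpose_mat R" n i i g] R i
  by (simp add: power2_eq_square ac_simps)

lemma orthonormal_mat_col_norm:
  assumes U: "orthonormal_mat n U" and i: "i < n"
  shows "(\<Sum>j<n. (U $$ (j,i))\<^sup>2) = 1"
  using congruence_diag_entry[OF orthonormal_mat_carrier[OF U] i, of "\<lambda>_. 1"]
    orthonormal_mat_left_inverse[OF U] orthonormal_mat_carrier[OF U] i by simp

lemma orthonormal_mat_row_norm:
  assumes U: "orthonormal_mat n U" and j: "j < n"
  shows "(\<Sum>i<n. (U $$ (j,i))\<^sup>2) = 1"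
  using orthonormal_mat_col_norm[OF orthonormal_mat_transpose[OF U] j] orthonormal_mat_carrier[OF U] j
  by simp

section \<open>The spectral theorem for real symmetric matrices\<close>

lemma sym_mat_complex_eigenvalue_real:
  fixes A :: "real mat"
  assumes A: "A \<in> carrier_mat n n" and S: "transpose_mat A = A"
    and v: "v \<in> carrier_vec n" "v \<noteq> 0\<^sub>v n"
    and Av: "map_mat complex_of_real A *\<^sub>v v = c \<cdot>\<^sub>v v"
  shows "c \<in> \<real>"
proof -
  have Aij: "A $$ (i,j) = A $$ (j,i)" if "i < n" "j < n" for i j
    using sym_mat_entry[OF S] that A by simp
  have Av_i: "(\<Sum>j<n. complex_of_real (A $$ (i,j)) * v $ j) = c * v $ i" if i: "i < n" for i
    using arg_cong[OF Av, of "\<lambda>w. w $ i"] i A v by (simp add: scalar_prod_def atLeast0LessThan)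
  define N where "N = (\<Sum>i<n. cnj (v $ i) * v $ i)"
  define s where "s = (\<Sum>i<n. cnj (v $ i) * (\<Sum>j<n. complex_of_real (A $$ (i,j)) * v $ j))"
  have "s = (\<Sum>i<n. cnj (v $ i) * (c * v $ i))"
    unfolding s_def by (intro sum.cong refl) (simp add: Av_i)
  then have s_eq: "s = c * N"
    unfolding N_def by (simp add: sum_distrib_left ac_simps)
  have "cnj s = (\<Sum>i<n. \<Sum>j<n. v $ i * complex_of_real (A $$ (i,j)) * cnj (v $ j))"
    unfolding s_def by (simp add: cnj_sum sum_distrib_left ac_simps)
  also have "\<dots> = (\<Sum>j<n. \<Sum>i<n. cnj (v $ j) * complex_of_real (A $$ (j,i)) * v $ i)"
    by (subst sum.swap) (intro sum.cong refl, simp add: Aij ac_simps)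
  also have "\<dots> = s"
    unfolding s_def by (simp add: sum_distrib_left ac_simps)
  finally have s_real: "cnj s = s" .
  have N_real: "cnj N = N"
    unfolding N_def by (simp add: cnj_sum ac_simps)
  have "N \<noteq> 0"
  proof
    assume "N = 0"
    moreover have "Re N = (\<Sum>i<n. (Re (v $ i))\<^sup>2 + (Im (v $ i))\<^sup>2)"
      unfolding N_def by (simp add: Re_sum sum.distrib power2_eq_square)
    ultimately have "(\<Sum>i<n. (Re (v $ i))\<^sup>2 + (Im (v $ i))\<^sup>2) = 0" by simp
    then have "\<forall>i<n. v $ i = 0"
      by (subst (asm) sum_nonneg_eq_0_iff) (auto simp: complex_eq_iff)
    with v show False by (auto intro: eq_vecI)
  qed
  then have "cnj c = c"
    using s_real N_real s_eq by (metis complex_cnj_mult mult_cancel_right)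
  then show ?thesis by (simp add: Reals_cnj_iff)
qed

lemma sym_mat_has_eigenvector:
  fixes A :: "real mat"
  assumes A: "A \<in> carrier_mat n n" and S: "transpose_mat A = A" and n: "n > 0"
  shows "\<exists>e u. u \<in> carrier_vec n \<and> u \<noteq> 0\<^sub>v n \<and> A *\<^sub>v u = e \<cdot>\<^sub>v u"
proof -
  let ?A = "map_mat complex_of_real A"
  have A': "?A \<in> carrier_mat n n" using A by simp
  obtain cs where cp: "char_poly ?A = (\<Prod>a\<leftarrow>cs. [:- a, 1:])" and len: "length cs = n"
    using char_poly_factorized[OF A'] by blast
  obtain c where c: "c \<in> set cs" using len n by (cases cs) auto
  have "poly (char_poly ?A) c = 0"
    unfolding cp using c by (simp add: poly_prod_list prod_list_zero_iff)
  then obtain v where "eigenvector ?A v c"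
    using eigenvalue_root_char_poly[OF A'] unfolding eigenvalue_def by blast
  then have v: "v \<in> carrier_vec n" "v \<noteq> 0\<^sub>v n" and Av: "?A *\<^sub>v v = c \<cdot>\<^sub>v v"
    unfolding eigenvector_def using A by auto
  obtain r where r: "c = complex_of_real r"
    using sym_mat_complex_eigenvalue_real[OF A S v Av] by (auto elim: Reals_cases)
  have "complex_of_real (poly (char_poly A) r) = poly (map_poly complex_of_real (char_poly A)) c"
    unfolding r by (simp add: of_real_hom.poly_map_poly)
  also have "\<dots> = poly (char_poly ?A) c"
    using of_real_hom.char_poly_hom[OF A] by metis
  finally have "complex_of_real (poly (char_poly A) r) = poly (char_poly ?A) c" .
  then have "poly (char_poly A) r = 0" using \<open>poly (char_poly ?A) c = 0\<close> by simp
  then obtain u where "eigenvector A u r"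
    using eigenvalue_root_char_poly[OF A] unfolding eigenvalue_def by blast
  then show ?thesis unfolding eigenvector_def using A by auto
qed

lemma orthonormal_mat_of_normalized_cols:
  fixes ws :: "real vec list"
  assumes ws: "set ws \<subseteq> carrier_vec n" "corthogonal ws" "length ws = n"
  shows "orthonormal_mat n (mat_of_cols n (map (\<lambda>w. (1 / sqrt (w \<bullet> w)) \<cdot>\<^sub>v w) ws))"
    (is "orthonormal_mat n ?W")
proof -
  have W: "?W \<in> carrier_mat n n" using ws(3) by (intro carrier_matI) auto
  have wsi: "ws ! i \<in> carrier_vec n" if "i < n" for i using ws that by auto
  have ws_orth: "ws ! i \<bullet> ws ! j = 0 \<longleftrightarrow> i \<noteq> j" if "i < n" "j < n" for i j
    using corthogonalD[OF ws(2), of i j] that ws(3) by simp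
  have ws_pos: "ws ! i \<bullet> ws ! i > 0" if "i < n" for i
  proof -
    have "ws ! i \<bullet> ws ! i \<ge> 0" unfolding scalar_prod_def by (auto intro: sum_nonneg)
    with ws_orth[OF that that] show ?thesis by simp
  qed
  have "transpose_mat ?W * ?W = 1\<^sub>m n"
  proof (rule eq_matI)
    fix i j assume "i < dim_row (1\<^sub>m n)" "j < dim_col (1\<^sub>m n)"
    then have ij: "i < n" "j < n" by auto
    have "(transpose_mat ?W * ?W) $$ (i,j)
        = 1 / sqrt (ws ! i \<bullet> ws ! i) * (1 / sqrt (ws ! j \<bullet> ws ! j)) * (ws ! i \<bullet> ws ! j)"
      using ij ws wsi[OF ij(1)] wsi[OF ij(2)] by simp
    also have "\<dots> = 1\<^sub>m n $$ (i,j)"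
      using ij ws_orth[OF ij] ws_pos[OF ij(1)] by (cases "i = j") (simp_all add: field_simps)
    finally show "(transpose_mat ?W * ?W) $$ (i,j) = 1\<^sub>m n $$ (i,j)" .
  qed (use W in auto)
  with W show ?thesis unfolding orthonormal_mat_def by simp
qed

lemma orthonormal_mat_with_first_col:
  fixes u :: "real vec"
  assumes u: "u \<in> carrier_vec n" "u \<noteq> 0\<^sub>v n"
  shows "\<exists>W a. orthonormal_mat n W \<and> col W 0 = a \<cdot>\<^sub>v u"
proof -
  interpret cof_vec_space n "TYPE(real)" .
  define b where "b = basis_completion u"
  from basis_completion[OF u, folded b_def]
  have b: "set b \<subseteq> carrier_vec n" "distinct b" "\<not> lin_dep (set b)" "hd b = u" "length b = n"
    by auto
  have n: "n > 0" using u by (cases n) auto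
  then obtain vs where b_Cons: "b = u # vs" using b(4,5) by (cases b) auto
  define ws where "ws = gram_schmidt n b"
  have ws: "set ws \<subseteq> carrier_vec n" "corthogonal ws" "length ws = n"
    using gram_schmidt_result[OF b(1-3) refl, folded ws_def] b(5) by auto
  have "hd ws = u"
    using gram_schmidt_hd[OF u(1), of vs, folded b_Cons] unfolding ws_def .
  then have "ws ! 0 = u" using ws(3) n by (cases ws) auto
  then have "col (mat_of_cols n (map (\<lambda>w. (1 / sqrt (w \<bullet> w)) \<cdot>\<^sub>v w) ws)) 0
      = (1 / sqrt (u \<bullet> u)) \<cdot>\<^sub>v u"
    using ws n u by simp
  with orthonormal_mat_of_normalized_cols[OF ws] show ?thesis by blast
qed

lemma mult_four_block_diag_mat:
  fixes A :: "'a :: semiring_0 mat"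
  assumes "A \<in> carrier_mat n1 n1" "B \<in> carrier_mat n2 n2" "C \<in> carrier_mat n1 n1" "D \<in> carrier_mat n2 n2"
  shows "four_block_mat A (0\<^sub>m n1 n2) (0\<^sub>m n2 n1) B * four_block_mat C (0\<^sub>m n1 n2) (0\<^sub>m n2 n1) D
       = four_block_mat (A * C) (0\<^sub>m n1 n2) (0\<^sub>m n2 n1) (B * D)"
  using assms by (simp add: mult_four_block_mat[of _ n1 n1 _ n2 _ n2 _ _ n1 _ n2])

lemma transpose_four_block_diag_mat:
  assumes "A \<in> carrier_mat n1 n1" "B \<in> carrier_mat n2 n2"
  shows "transpose_mat (four_block_mat A (0\<^sub>m n1 n2) (0\<^sub>m n2 n1) B)
       = four_block_mat (transpose_mat A) (0\<^sub>m n1 n2) (0\<^sub>m n2 n1) (transpose_mat B)"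
  by (subst transpose_four_block_mat[OF assms(1) _ _ assms(2)]) auto

lemma mat_diag_Suc_four_block:
  "mat_diag (Suc m) l =
     four_block_mat (mat_diag 1 (\<lambda>_. l 0)) (0\<^sub>m 1 m) (0\<^sub>m m 1) (mat_diag m (\<lambda>i. l (Suc i)))"
  by (rule eq_matI) (auto simp: mat_diag_def)

lemma orthonormal_mat_four_block_one:
  assumes Q: "orthonormal_mat m Q"
  shows "orthonormal_mat (Suc m) (four_block_mat (1\<^sub>m 1) (0\<^sub>m 1 m) (0\<^sub>m m 1) Q)"
    (is "orthonormal_mat _ ?F")
proof -
  have Qc: "Q \<in> carrier_mat m m" using Q by (rule orthonormal_mat_carrier)
  have "transpose_mat ?F * ?F = four_block_mat (1\<^sub>m 1) (0\<^sub>m 1 m) (0\<^sub>m m 1) (transpose_mat Q * Q)"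
    using Qc by (simp add: transpose_four_block_diag_mat mult_four_block_diag_mat)
  also have "\<dots> = 1\<^sub>m (Suc m)"
    using four_block_one_mat[of 1 m] orthonormal_mat_left_inverse[OF Q] by simp
  finally show ?thesis
    using four_block_carrier_mat[of "1\<^sub>m 1" 1 1 Q m m] Qc unfolding orthonormal_mat_def by simp
qed

lemma conj_diag_four_block_one:
  fixes Q :: "'a :: comm_ring_1 mat"
  assumes Q: "Q \<in> carrier_mat m m"
  shows "four_block_mat (1\<^sub>m 1) (0\<^sub>m 1 m) (0\<^sub>m m 1) Q * mat_diag (Suc m) l
           * transpose_mat (four_block_mat (1\<^sub>m 1) (0\<^sub>m 1 m) (0\<^sub>m m 1) Q)
       = four_block_mat (mat_diag 1 (\<lambda>_. l 0)) (0\<^sub>m 1 m) (0\<^sub>m m 1)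
           (Q * mat_diag m (\<lambda>i. l (Suc i)) * transpose_mat Q)"
proof -
  have left: "four_block_mat (1\<^sub>m 1) (0\<^sub>m 1 m) (0\<^sub>m m 1) Q * mat_diag (Suc m) l
      = four_block_mat (mat_diag 1 (\<lambda>_. l 0)) (0\<^sub>m 1 m) (0\<^sub>m m 1)
          (Q * mat_diag m (\<lambda>i. l (Suc i)))"
    unfolding mat_diag_Suc_four_block[of m l]
    by (subst mult_four_block_diag_mat[of _ 1 _ m]) (use Q in auto)
  show ?thesis
    unfolding transpose_four_block_diag_mat[OF one_carrier_mat Q] transpose_one left
    by (subst mult_four_block_diag_mat[of _ 1 _ m]) (use Q in auto)
qed

lemma congruence_col0_eigenvector:
  fixes A :: "real mat"
  assumes A: "A \<in> carrier_mat n n" and W: "orthonormal_mat n W"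
    and ev: "A *\<^sub>v col W 0 = e \<cdot>\<^sub>v col W 0" and i: "i < n"
  shows "(transpose_mat W * A * W) $$ (i,0) = (if i = 0 then e else 0)"
proof -
  have Wc: "W \<in> carrier_mat n n" using W by (rule orthonormal_mat_carrier)
  have "(transpose_mat W * A * W) $$ (i,0) = (transpose_mat W * (A * W)) $$ (i,0)"
    using A Wc by (simp add: assoc_mult_mat[of _ n n _ n _ n])
  also have "\<dots> = col W i \<bullet> (A *\<^sub>v col W 0)"
    using i A Wc by (simp add: col_mult2 mult_mat_vec_def)
  also have "\<dots> = e * (transpose_mat W * W) $$ (i,0)"
    unfolding ev using Wc i by simp
  finally show ?thesis using orthonormal_mat_left_inverse[OF W] i by simp
qed

lemma congruence_deflate:
  fixes A :: "real mat"
  assumes A: "A \<in> carrier_mat (Suc m) (Suc m)" and S: "transpose_mat A = A"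
    and W: "orthonormal_mat (Suc m) W" and ev: "A *\<^sub>v col W 0 = e \<cdot>\<^sub>v col W 0"
  defines "A' \<equiv> transpose_mat W * A * W"
  shows "A' = four_block_mat (mat_diag 1 (\<lambda>_. e)) (0\<^sub>m 1 m) (0\<^sub>m m 1)
                (mat m m (\<lambda>(i,j). A' $$ (Suc i, Suc j)))" (is "_ = ?B")
proof -
  have Wc: "W \<in> carrier_mat (Suc m) (Suc m)" using W by (rule orthonormal_mat_carrier)
  have A': "A' \<in> carrier_mat (Suc m) (Suc m)" unfolding A'_def using A Wc by simp
  have col0: "A' $$ (i,0) = (if i = 0 then e else 0)" if "i < Suc m" for i
    unfolding A'_def using congruence_col0_eigenvector[OF A W ev that] .
  have row0: "A' $$ (0,j) = (if j = 0 then e else 0)" if "j < Suc m" for j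
    using col0[OF that] sym_mat_entry[OF transpose_congruence[OF A Wc S], folded A'_def, of j 0]
      that A' by simp
  show ?thesis
  proof (rule eq_matI)
    fix i j assume "i < dim_row ?B" "j < dim_col ?B"
    then have ij: "i < Suc m" "j < Suc m" by auto
    then show "A' $$ (i,j) = ?B $$ (i,j)"
      by (cases i; cases j) (auto simp: col0 row0 mat_diag_def)
  qed (use A' in auto)
qed

theorem sym_mat_spectral_decomposition:
  fixes A :: "real mat"
  assumes "A \<in> carrier_mat n n" and "transpose_mat A = A"
  shows "\<exists>Q l. orthonormal_mat n Q \<and> A = Q * mat_diag n l * transpose_mat Q"
  using assms
proof (induction n arbitrary: A)
  case 0
  then have "A = 1\<^sub>m 0 * mat_diag 0 (\<lambda>_. 0) * transpose_mat (1\<^sub>m 0)"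
    by (intro eq_matI) auto
  then show ?case using orthonormal_mat_one by blast
next
  case (Suc m A)
  note A = Suc.prems(1) and S = Suc.prems(2)
  obtain e u where u: "u \<in> carrier_vec (Suc m)" "u \<noteq> 0\<^sub>v (Suc m)"
    and Au: "A *\<^sub>v u = e \<cdot>\<^sub>v u"
    using sym_mat_has_eigenvector[OF A S] by auto
  obtain W a where W: "orthonormal_mat (Suc m) W" and W0: "col W 0 = a \<cdot>\<^sub>v u"
    using orthonormal_mat_with_first_col[OF u] by blast
  have Wc: "W \<in> carrier_mat (Suc m) (Suc m)" using W by (rule orthonormal_mat_carrier)
  have ev: "A *\<^sub>v col W 0 = e \<cdot>\<^sub>v col W 0"
    unfolding W0 using A u Au by (simp add: mult_mat_vec smult_smult_assoc mult.commute)
  define A' where "A' = transpose_mat W * A * W"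
  define B where "B = mat m m (\<lambda>(i,j). A' $$ (Suc i, Suc j))"
  have A'_block: "A' = four_block_mat (mat_diag 1 (\<lambda>_. e)) (0\<^sub>m 1 m) (0\<^sub>m m 1) B"
    unfolding A'_def B_def by (rule congruence_deflate[OF A S W ev])
  have A'_sym: "transpose_mat A' = A'"
    unfolding A'_def by (rule transpose_congruence[OF A Wc S])
  have "transpose_mat B = B"
    unfolding B_def by (rule eq_matI) (use A Wc A'_sym in \<open>auto simp: A'_def sym_mat_entry\<close>)
  then obtain Q' l' where Q': "orthonormal_mat m Q'" and B: "B = Q' * mat_diag m l' * transpose_mat Q'"
    using Suc.IH[of B] B_def by auto
  define Q where "Q = W * four_block_mat (1\<^sub>m 1) (0\<^sub>m 1 m) (0\<^sub>m m 1) Q'"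
  define l where "l = case_nat e l'"
  have "W * A' * transpose_mat W = (W * transpose_mat W) * A * (W * transpose_mat W)"
    unfolding A'_def using A Wc by (simp add: assoc_mult_mat[of _ "Suc m" "Suc m" _ "Suc m" _ "Suc m"])
  then have "A = W * A' * transpose_mat W"
    using A orthonormal_mat_right_inverse[OF W] by simp
  also have "A' = four_block_mat (1\<^sub>m 1) (0\<^sub>m 1 m) (0\<^sub>m m 1) Q' * mat_diag (Suc m) l
           * transpose_mat (four_block_mat (1\<^sub>m 1) (0\<^sub>m 1 m) (0\<^sub>m m 1) Q')"
    unfolding conj_diag_four_block_one[OF orthonormal_mat_carrier[OF Q']] A'_block B l_def
    by simp
  also have "W * \<dots> * transpose_mat W = Q * mat_diag (Suc m) l * transpose_mat Q"
    unfolding Q_def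
    by (rule conj_diag_mult[OF Wc orthonormal_mat_carrier[OF orthonormal_mat_four_block_one[OF Q']]])
  finally show ?case
    using orthonormal_mat_mult[OF W orthonormal_mat_four_block_one[OF Q']] Q_def by blast
qed

definition perm_mat :: "nat \<Rightarrow> (nat \<Rightarrow> nat) \<Rightarrow> real mat" where
  "perm_mat n p = mat n n (\<lambda>(i,j). if i = p j then 1 else 0)"

lemma perm_mat_conj_diag:
  assumes p: "p permutes {..<n}"
  shows "perm_mat n p * mat_diag n (\<lambda>i. l (p i)) * transpose_mat (perm_mat n p) = mat_diag n l"
proof (rule eq_matI)
  fix i j assume "i < dim_row (mat_diag n l)" "j < dim_col (mat_diag n l)"
  then have ij: "i < n" "j < n" by auto
  have P: "perm_mat n p \<in> carrier_mat n n" by (simp add: perm_mat_def)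
  have "(perm_mat n p * mat_diag n (\<lambda>i. l (p i)) * transpose_mat (perm_mat n p)) $$ (i,j)
      = (\<Sum>k<n. (\<lambda>k. if i = k \<and> j = k then l k else 0) (p k))"
    unfolding conj_diag_entry[OF P ij] by (rule sum.cong) (auto simp: perm_mat_def ij permutes_in_image[OF p])
  also have "\<dots> = (\<Sum>k<n. if i = k \<and> j = k then l k else 0)"
    by (rule sum.permute[OF p, of "\<lambda>k. if i = k \<and> j = k then l k else 0", unfolded comp_def, symmetric])
  also have "\<dots> = mat_diag n l $$ (i,j)"
    using ij by (cases "i = j") (simp_all add: mat_diag_def)
  finally show "(perm_mat n p * mat_diag n (\<lambda>i. l (p i)) * transpose_mat (perm_mat n p)) $$ (i,j)
      = mat_diag n l $$ (i,j)" .
qed (auto simp: perm_mat_def)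

lemma orthonormal_perm_mat:
  assumes p: "p permutes {..<n}"
  shows "orthonormal_mat n (perm_mat n p)"
proof -
  have P: "perm_mat n p \<in> carrier_mat n n" by (simp add: perm_mat_def)
  have "perm_mat n p * transpose_mat (perm_mat n p) = 1\<^sub>m n"
    using perm_mat_conj_diag[OF p, of "\<lambda>_. 1"] P by simp
  then show ?thesis
    using mat_mult_left_right_inverse[OF P transpose_carrier_mat[THEN iffD2, OF P]] P unfolding orthonormal_mat_def by auto
qed

theorem sym_mat_sorted_spectral_decomposition:
  fixes A :: "real mat"
  assumes "A \<in> carrier_mat n n" and "transpose_mat A = A"
  shows "\<exists>Q l. orthonormal_mat n Q \<and> A = Q * mat_diag n l * transpose_mat Q \<and>
               sorted_wrt (\<ge>) (map l [0..<n])"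
proof -
  obtain Q l where Q: "orthonormal_mat n Q" and A: "A = Q * mat_diag n l * transpose_mat Q"
    using sym_mat_spectral_decomposition[OF assms] by blast
  obtain p where p': "p permutes {..<length (map l [0..<n])}"
    and sorted: "permute_list p (map l [0..<n]) = rev (sort (map l [0..<n]))"
    using mset_eq_permutation[of "rev (sort (map l [0..<n]))" "map l [0..<n]"] by auto
  have p: "p permutes {..<n}" using p' by simp
  have "rev (sort (map l [0..<n])) ! i = l (p i)" if "i < n" for i
  proof -
    have "p i < n" using permutes_in_image[OF p] that by simp
    then show ?thesis unfolding sorted[symmetric] using p' that by (simp add: permute_list_nth)
  qed
  then have "map (\<lambda>i. l (p i)) [0..<n] = rev (sort (map l [0..<n]))"
    by (intro nth_equalityI) auto
  then have "sorted_wrt (\<ge>) (map (\<lambda>i. l (p i)) [0..<n])"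
    by (simp add: sorted_wrt_rev)
  moreover have "A = (Q * perm_mat n p) * mat_diag n (\<lambda>i. l (p i)) * transpose_mat (Q * perm_mat n p)"
    unfolding A
    using conj_diag_mult[OF orthonormal_mat_carrier[OF Q] orthonormal_mat_carrier[OF orthonormal_perm_mat[OF p]]]
      perm_mat_conj_diag[OF p] by metis
  ultimately show ?thesis using orthonormal_mat_mult[OF Q orthonormal_perm_mat[OF p]] by blast
qed

section \<open>Real powers and eigenvalues of a diagonalised matrix\<close>

lemma mat_diag_commute_fun:
  fixes W :: "'a :: idom mat"
  assumes W: "W \<in> carrier_mat n n" and comm: "mat_diag n l1 * W = W * mat_diag n l2"
  shows "mat_diag n (\<lambda>i. f (l1 i)) * W = W * mat_diag n (\<lambda>i. f (l2 i))"
proof (rule eq_matI)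
  fix i j assume "i < dim_row (W * mat_diag n (\<lambda>i. f (l2 i)))" "j < dim_col (W * mat_diag n (\<lambda>i. f (l2 i)))"
  then have ij: "i < n" "j < n" using W by auto
  have "l1 i * W $$ (i,j) = W $$ (i,j) * l2 j"
    using arg_cong[OF comm, of "\<lambda>M. M $$ (i,j)"] ij
    by (simp add: mat_diag_mult_left[OF W] mat_diag_mult_right[OF W])
  then have "W $$ (i,j) = 0 \<or> l1 i = l2 j" by (metis mult.commute mult_cancel_right)
  then show "(mat_diag n (\<lambda>i. f (l1 i)) * W) $$ (i,j) = (W * mat_diag n (\<lambda>i. f (l2 i))) $$ (i,j)"
    using ij by (auto simp: mat_diag_mult_left[OF W] mat_diag_mult_right[OF W])
qed (use W in auto)

text \<open>mat_powr picks a spectral decomposition by choice; the result does not depend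
  on that choice.\<close>

lemma conj_diag_unique:
  assumes Q1: "orthonormal_mat n Q1" and Q2: "orthonormal_mat n Q2"
    and eq: "Q1 * mat_diag n l1 * transpose_mat Q1 = Q2 * mat_diag n l2 * transpose_mat Q2"
  shows "Q1 * mat_diag n (\<lambda>i. f (l1 i)) * transpose_mat Q1
       = Q2 * mat_diag n (\<lambda>i. f (l2 i)) * transpose_mat Q2"
proof -
  have C: "Q1 \<in> carrier_mat n n" "Q2 \<in> carrier_mat n n"
    using Q1 Q2 by (auto dest: orthonormal_mat_carrier)
  note assoc = assoc_mult_mat[of _ n n _ n _ n] mult_carrier_mat[of _ n n _ n]
  define W where "W = transpose_mat Q1 * Q2"
  have W: "W \<in> carrier_mat n n" unfolding W_def using C by simp
  have "mat_diag n l1 * W = (transpose_mat Q1 * Q1) * mat_diag n l1 * (transpose_mat Q1 * Q2)"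
    unfolding W_def orthonormal_mat_left_inverse[OF Q1] using C by simp
  also have "\<dots> = transpose_mat Q1 * (Q1 * mat_diag n l1 * transpose_mat Q1) * Q2"
    using C by (simp add: assoc)
  also have "\<dots> = (transpose_mat Q1 * Q2) * mat_diag n l2 * (transpose_mat Q2 * Q2)"
    unfolding eq using C by (simp add: assoc)
  also have "\<dots> = W * mat_diag n l2"
    unfolding W_def orthonormal_mat_left_inverse[OF Q2] using C by simp
  finally have comm: "mat_diag n (\<lambda>i. f (l1 i)) * W = W * mat_diag n (\<lambda>i. f (l2 i))"
    by (rule mat_diag_commute_fun[OF W])
  have "Q1 * mat_diag n (\<lambda>i. f (l1 i)) * transpose_mat Q1
      = Q1 * (mat_diag n (\<lambda>i. f (l1 i)) * W) * transpose_mat Q2"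
    unfolding W_def using C orthonormal_mat_right_inverse[OF Q2] by (simp add: assoc)
  also have "\<dots> = (Q1 * transpose_mat Q1) * Q2 * mat_diag n (\<lambda>i. f (l2 i)) * transpose_mat Q2"
    unfolding comm using C by (simp add: W_def assoc)
  finally show ?thesis
    unfolding orthonormal_mat_right_inverse[OF Q1] using C by simp
qed

lemma mat_powr_conj_diag:
  assumes Q: "orthonormal_mat n Q"
  shows "mat_powr (Q * mat_diag n l * transpose_mat Q) t = Q * mat_diag n (\<lambda>i. l i powr t) * transpose_mat Q"
proof -
  let ?M = "Q * mat_diag n l * transpose_mat Q"
  let ?P = "\<lambda>P. \<exists>Q' l'. Q' \<in> carrier_mat n n \<and> transpose_mat Q' * Q' = 1\<^sub>m n \<and>
      ?M = Q' * mat_diag n l' * transpose_mat Q' \<and> P = Q' * mat_diag n (\<lambda>i. l' i powr t) * transpose_mat Q'"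
  have dim: "dim_row ?M = n" using orthonormal_mat_carrier[OF Q] by simp
  have "\<exists>P. ?P P" using Q unfolding orthonormal_mat_def by blast
  from someI_ex[OF this] have "?P (mat_powr ?M t)"
    unfolding mat_powr_def Let_def dim .
  then obtain Q' l' where Q': "orthonormal_mat n Q'" and M: "?M = Q' * mat_diag n l' * transpose_mat Q'"
    and powr: "mat_powr ?M t = Q' * mat_diag n (\<lambda>i. l' i powr t) * transpose_mat Q'"
    unfolding orthonormal_mat_def by blast
  show ?thesis
    unfolding powr by (rule conj_diag_unique[OF Q' Q M[symmetric]])
qed

lemma char_poly_conj_diag:
  assumes Q: "orthonormal_mat n Q"
  shows "char_poly (Q * mat_diag n l * transpose_mat Q) = (\<Prod>a\<leftarrow>map l [0..<n]. [:- a, 1:])"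
proof -
  have Qc: "Q \<in> carrier_mat n n" using Q by (rule orthonormal_mat_carrier)
  have "similar_mat (Q * mat_diag n l * transpose_mat Q) (mat_diag n l)"
    unfolding similar_mat_def similar_mat_wit_def Let_def
    using Qc orthonormal_mat_left_inverse[OF Q] orthonormal_mat_right_inverse[OF Q]
    by (intro exI[of _ Q] exI[of _ "transpose_mat Q"]) auto
  then have "char_poly (Q * mat_diag n l * transpose_mat Q) = char_poly (mat_diag n l)"
    by (rule char_poly_similar)
  also have "\<dots> = (\<Prod>a\<leftarrow>diag_mat (mat_diag n l). [:- a, 1:])"
    by (rule char_poly_upper_triangular[of _ n]) (auto simp: upper_triangular_def mat_diag_def)
  also have "diag_mat (mat_diag n l) = map l [0..<n]"
    by (auto simp: diag_mat_def mat_diag_def intro: nth_equalityI)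
  finally show ?thesis .
qed

lemma order_prod_linear_factors:
  "Polynomial.order a (\<Prod>b\<leftarrow>xs. [:- b, 1:]) = count (mset xs) (a :: 'a :: idom)"
proof (induction xs)
  case Nil
  then show ?case by (simp add: order_0I)
next
  case (Cons b xs)
  have "(\<Prod>b\<leftarrow>xs. [:- b, 1:]) \<noteq> (0 :: 'a poly)"
    by (auto simp: prod_list_zero_iff)
  then have "[:- b, 1:] * (\<Prod>b\<leftarrow>xs. [:- b, 1:]) \<noteq> (0 :: 'a poly)"
    by (metis mult_eq_0_iff pCons_eq_0_iff one_neq_zero)
  then have "Polynomial.order a ([:- b, 1:] * (\<Prod>b\<leftarrow>xs. [:- b, 1:]))
      = Polynomial.order a [:- b, 1:] + Polynomial.order a (\<Prod>b\<leftarrow>xs. [:- b, 1:])"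
    by (rule order_mult)
  also have "Polynomial.order a [:- b, 1:] = (if b = a then 1 else 0)"
    using order_linear'[of a "-b"] by simp
  finally show ?case using Cons.IH by simp
qed

lemma prod_linear_factors_eq_iff:
  "(\<Prod>b\<leftarrow>xs. [:- b, 1:]) = (\<Prod>b\<leftarrow>ys. [:- b, 1:] :: 'a :: idom poly)
     \<longleftrightarrow> mset xs = mset ys"
proof
  assume "(\<Prod>b\<leftarrow>xs. [:- b, 1:]) = (\<Prod>b\<leftarrow>ys. [:- b, 1:] :: 'a poly)"
  then show "mset xs = mset ys"
    by (intro multiset_eqI) (metis order_prod_linear_factors)
next
  assume "mset xs = mset ys"
  then show "(\<Prod>b\<leftarrow>xs. [:- b, 1:]) = (\<Prod>b\<leftarrow>ys. [:- b, 1:] :: 'a poly)"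
    by (metis mset_map prod_mset_prod_list)
qed

lemma sorted_desc_mset_unique:
  fixes xs ys :: "'a :: linorder list"
  assumes "sorted_wrt (\<ge>) xs" "sorted_wrt (\<ge>) ys" "mset xs = mset ys"
  shows "xs = ys"
proof -
  have "sort (rev ys) = rev xs" "sort (rev ys) = rev ys"
    using assms by (simp_all add: properties_for_sort sorted_wrt_rev)
  then show ?thesis by simp
qed

lemma eigvals_desc_conj_diag:
  assumes Q: "orthonormal_mat n Q" and l: "sorted_wrt (\<ge>) (map l [0..<n])"
  shows "eigvals_desc (Q * mat_diag n l * transpose_mat Q) = map l [0..<n]"
  unfolding eigvals_desc_def
proof (rule the_equality)
  show "sorted_wrt (\<ge>) (map l [0..<n]) \<and>
      char_poly (Q * mat_diag n l * transpose_mat Q) = (\<Prod>a\<leftarrow>map l [0..<n]. [:- a, 1:])"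
    using l char_poly_conj_diag[OF Q] by simp
next
  fix ys
  assume "sorted_wrt (\<ge>) ys \<and> char_poly (Q * mat_diag n l * transpose_mat Q) = (\<Prod>a\<leftarrow>ys. [:- a, 1:])"
  then show "ys = map l [0..<n]"
    using l char_poly_conj_diag[OF Q] sorted_desc_mset_unique prod_linear_factors_eq_iff by metis
qed

lemma sum_eig_dec_conj_diag:
  assumes Q: "orthonormal_mat n Q" and l: "sorted_wrt (\<ge>) (map l [0..<n])" and k: "k \<le> n"
  shows "(\<Sum>j=1..k. eig_dec (Q * mat_diag n l * transpose_mat Q) j) = (\<Sum>i<k. l i)"
  using k by (simp add: sum.atLeast1_atMost_eq eig_dec_def eigvals_desc_conj_diag[OF Q l])

section \<open>Ky Fan's maximum principle\<close>

lemma weighted_sum_le_sum_prefix: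
  fixes e c :: "nat \<Rightarrow> real"
  assumes e: "\<And>i j. i \<le> j \<Longrightarrow> j < n \<Longrightarrow> e j \<le> e i"
    and c: "\<And>i. i < n \<Longrightarrow> 0 \<le> c i \<and> c i \<le> 1"
    and sum_c: "(\<Sum>i<n. c i) = real k" and k: "k \<le> n"
  shows "(\<Sum>i<n. e i * c i) \<le> (\<Sum>i<k. e i)"
proof -
  \<comment> \<open>Weight missing below index k sits above it, where e is at most t.\<close>
  define t where "t = e (k - 1)"
  have split: "(\<Sum>i<n. f i) = (\<Sum>i<k. f i) + (\<Sum>i=k..<n. f i)" for f :: "nat \<Rightarrow> real"
    using k by (simp add: atLeast0LessThan[symmetric] sum.atLeastLessThan_concat)
  have "(\<Sum>i=k..<n. e i * c i) \<le> (\<Sum>i=k..<n. t * c i)"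
    using e[of "k - 1"] c by (intro sum_mono mult_right_mono) (auto simp: t_def)
  moreover have "(\<Sum>i<k. t * (1 - c i)) \<le> (\<Sum>i<k. e i * (1 - c i))"
    using e[of _ "k - 1"] c k by (intro sum_mono mult_right_mono) (auto simp: t_def)
  moreover have "(\<Sum>i=k..<n. c i) = real k - (\<Sum>i<k. c i)"
    using sum_c split[of c] by simp
  ultimately show ?thesis
    using split[of "\<lambda>i. e i * c i"]
    by (simp add: sum_distrib_left[symmetric] sum_subtractf algebra_simps)
qed

definition ky_fan_trace :: "nat \<Rightarrow> real mat \<Rightarrow> real mat \<Rightarrow> real" where
  "ky_fan_trace k X W = (\<Sum>i<k. (transpose_mat W * X * W) $$ (i,i))"

lemma ky_fan_trace_le:
  assumes Q: "orthonormal_mat n Q" and W: "orthonormal_mat n W" and k: "k \<le> n"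
    and l: "sorted_wrt (\<ge>) (map l [0..<n])"
  shows "ky_fan_trace k (Q * mat_diag n l * transpose_mat Q) W \<le> (\<Sum>i<k. l i)"
proof -
  define U where "U = transpose_mat Q * W"
  have U: "orthonormal_mat n U"
    unfolding U_def by (rule orthonormal_mat_mult[OF orthonormal_mat_transpose[OF Q] W])
  have Uc: "U \<in> carrier_mat n n" using U by (rule orthonormal_mat_carrier)
  have "transpose_mat W * (Q * mat_diag n l * transpose_mat Q) * W = transpose_mat U * mat_diag n l * U"
    unfolding U_def using orthonormal_mat_carrier[OF Q] orthonormal_mat_carrier[OF W]
    by (simp add: transpose_mult[of _ n n _ n] assoc_mult_mat[of _ n n _ n _ n] mult_carrier_mat[of _ n n _ n])
  then have "ky_fan_trace k (Q * mat_diag n l * transpose_mat Q) W = (\<Sum>i<k. \<Sum>j<n. (U $$ (j,i))\<^sup>2 * l j)"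
    unfolding ky_fan_trace_def using k by (intro sum.cong refl) (simp add: congruence_diag_entry[OF Uc])
  also have "\<dots> = (\<Sum>j<n. l j * (\<Sum>i<k. (U $$ (j,i))\<^sup>2))"
    by (subst sum.swap) (simp add: sum_distrib_left ac_simps)
  also have "\<dots> \<le> (\<Sum>i<k. l i)"
  proof (rule weighted_sum_le_sum_prefix[OF _ _ _ k])
    show "l j \<le> l i" if "i \<le> j" "j < n" for i j
      using that sorted_wrt_nth_less[OF l, of i j] by (cases "i = j") auto
    show "0 \<le> (\<Sum>i<k. (U $$ (j,i))\<^sup>2) \<and> (\<Sum>i<k. (U $$ (j,i))\<^sup>2) \<le> 1" if "j < n" for j
      using orthonormal_mat_row_norm[OF U that] sum_mono2[of "{..<n}" "{..<k}" "\<lambda>i. (U $$ (j,i))\<^sup>2"] k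
      by (auto intro: sum_nonneg)
    show "(\<Sum>j<n. \<Sum>i<k. (U $$ (j,i))\<^sup>2) = real k"
      using orthonormal_mat_col_norm[OF U] k by (subst sum.swap) simp
  qed
  finally show ?thesis .
qed

lemma ky_fan_trace_eigenbasis:
  assumes Q: "orthonormal_mat n Q" and k: "k \<le> n"
  shows "ky_fan_trace k (Q * mat_diag n l * transpose_mat Q) Q = (\<Sum>i<k. l i)"
proof -
  have "transpose_mat Q * (Q * mat_diag n l * transpose_mat Q) * Q
      = (transpose_mat Q * Q) * mat_diag n l * (transpose_mat Q * Q)"
    using orthonormal_mat_carrier[OF Q]
    by (simp add: assoc_mult_mat[of _ n n _ n _ n] mult_carrier_mat[of _ n n _ n])
  then show ?thesis
    unfolding ky_fan_trace_def orthonormal_mat_left_inverse[OF Q] using k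
    by (intro sum.cong refl) (simp add: mat_diag_def)
qed

theorem ky_fan_maximum_principle:
  fixes X :: "real mat"
  assumes X: "X \<in> carrier_mat n n" "transpose_mat X = X" and k: "k \<le> n"
  shows "\<forall>W. orthonormal_mat n W \<longrightarrow> ky_fan_trace k X W \<le> (\<Sum>j=1..k. eig_dec X j)"
    and "\<exists>W. orthonormal_mat n W \<and> ky_fan_trace k X W = (\<Sum>j=1..k. eig_dec X j)"
proof -
  obtain Q l where Q: "orthonormal_mat n Q" and XQ: "X = Q * mat_diag n l * transpose_mat Q"
    and l: "sorted_wrt (\<ge>) (map l [0..<n])"
    using sym_mat_sorted_spectral_decomposition[OF X] by blast
  show "\<forall>W. orthonormal_mat n W \<longrightarrow> ky_fan_trace k X W \<le> (\<Sum>j=1..k. eig_dec X j)"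
    unfolding XQ sum_eig_dec_conj_diag[OF Q l k] using ky_fan_trace_le[OF Q _ k l] by blast
  show "\<exists>W. orthonormal_mat n W \<and> ky_fan_trace k X W = (\<Sum>j=1..k. eig_dec X j)"
    unfolding XQ sum_eig_dec_conj_diag[OF Q l k] using ky_fan_trace_eigenbasis[OF Q k] Q by blast
qed

section \<open>Convexity\<close>

lemma convex_on_powr_exponent: "convex_on UNIV (\<lambda>t. (a :: real) powr t)"
proof (cases "a = 0")
  case True
  then show ?thesis by (simp add: convex_on_const)
next
  case False
  show ?thesis
  proof (rule convex_onI)
    fix s x y :: real assume s: "0 < s" "s < 1"
    have "exp ((1-s) *\<^sub>R (x * ln a) + s *\<^sub>R (y * ln a)) \<le> (1-s) * exp (x * ln a) + s * exp (y * ln a)"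
      by (rule convex_onD[OF exp_convex]) (use s in auto)
    then show "a powr ((1-s) *\<^sub>R x + s *\<^sub>R y) \<le> (1-s) * a powr x + s * a powr y"
      using False by (simp add: powr_def algebra_simps)
  qed simp
qed

lemma convex_on_powr_nonneg:
  fixes p :: real
  assumes p: "p \<ge> 1"
  shows "convex_on {0..} (\<lambda>x. x powr p)"
proof (rule convex_onI)
  fix s a b :: real assume s: "0 < s" "s < 1" and ab: "a \<in> {0..}" "b \<in> {0..}"
  have scale: "(c * x) powr p \<le> c * x powr p" if "0 < c" "c < 1" "0 \<le> x" for c x :: real
    using that powr_le_one_le[of c p] p by (simp add: powr_mult mult_right_mono)
  show "((1-s) *\<^sub>R a + s *\<^sub>R b) powr p \<le> (1-s) * a powr p + s * b powr p"
  proof (cases "a = 0 \<or> b = 0")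
    case False
    with convex_onD[OF powr_convex[OF p], of s a b] s ab show ?thesis by auto
  next
    case True
    with scale[of s b] scale[of "1 - s" a] s ab p show ?thesis by auto
  qed
qed (simp add: convex_real_interval)

lemma convex_on_sum_fun:
  assumes "finite A" "convex S" "\<And>i. i \<in> A \<Longrightarrow> convex_on S (f i)"
  shows "convex_on S (\<lambda>x. \<Sum>i\<in>A. f i x)"
  using assms by (induction A rule: finite_induct) (auto simp: convex_on_const)

lemma convex_on_mono_comp:
  fixes f :: "'a :: real_vector \<Rightarrow> real"
  assumes f: "convex_on S f" and g: "convex_on T g" and mono: "mono_on T g" and fT: "f ` S \<subseteq> T"
  shows "convex_on S (\<lambda>x. g (f x))"
proof (rule convex_onI)
  fix s :: real and x y assume s: "0 < s" "s < 1" and xy: "x \<in> S" "y \<in> S"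
  have T: "(1 - s) *\<^sub>R f x + s *\<^sub>R f y \<in> T"
    using convexD_alt[OF convex_on_imp_convex[OF g], of "f x" "f y" s] fT xy s by auto
  have "f ((1 - s) *\<^sub>R x + s *\<^sub>R y) \<in> T"
    using convexD_alt[OF convex_on_imp_convex[OF f]] fT xy s by auto
  moreover have "f ((1 - s) *\<^sub>R x + s *\<^sub>R y) \<le> (1 - s) *\<^sub>R f x + s *\<^sub>R f y"
    using convex_onD[OF f] xy s by simp
  ultimately have "g (f ((1 - s) *\<^sub>R x + s *\<^sub>R y)) \<le> g ((1 - s) *\<^sub>R f x + s *\<^sub>R f y)"
    using mono T by (simp add: mono_onD)
  also have "\<dots> \<le> (1 - s) * g (f x) + s * g (f y)"
    using convex_onD[OF g, of s "f x" "f y"] fT xy s by auto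
  finally show "g (f ((1 - s) *\<^sub>R x + s *\<^sub>R y)) \<le> (1 - s) * g (f x) + s * g (f y)" .
qed (rule convex_on_imp_convex[OF f])

lemma convex_on_attained_sup:
  assumes I: "convex I"
    and conv: "\<And>W. W \<in> S \<Longrightarrow> convex_on I (g W)"
    and le: "\<And>W t. W \<in> S \<Longrightarrow> t \<in> I \<Longrightarrow> g W t \<le> f t"
    and attained: "\<And>t. t \<in> I \<Longrightarrow> \<exists>W\<in>S. g W t = f t"
  shows "convex_on I f"
proof (rule convex_onI[OF _ I])
  fix s :: real and x y assume s: "0 < s" "s < 1" and xy: "x \<in> I" "y \<in> I"
  have "(1 - s) *\<^sub>R x + s *\<^sub>R y \<in> I" using convexD_alt[OF I xy] s by simp
  then obtain W where W: "W \<in> S"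
    and eq: "g W ((1 - s) *\<^sub>R x + s *\<^sub>R y) = f ((1 - s) *\<^sub>R x + s *\<^sub>R y)"
    using attained by blast
  have "g W ((1 - s) *\<^sub>R x + s *\<^sub>R y) \<le> (1 - s) * g W x + s * g W y"
    using convex_onD[OF conv[OF W]] xy s by simp
  also have "\<dots> \<le> (1 - s) * f x + s * f y"
    using le[OF W] xy s by (intro add_mono mult_left_mono) auto
  finally show "f ((1 - s) *\<^sub>R x + s *\<^sub>R y) \<le> (1 - s) * f x + s * f y" by (simp add: eq)
qed

section \<open>Ky Fan sums along a geodesic\<close>

lemma geod_conj_diag_powr:
  fixes A B :: "real mat"
  assumes A: "A \<in> carrier_mat n n" "transpose_mat A = A"
    and B: "B \<in> carrier_mat n n" "transpose_mat B = B"
  obtains h Q l where "h \<in> carrier_mat n n" "transpose_mat h = h" "orthonormal_mat n Q"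
    "\<And>t. geod A B t = h * (Q * mat_diag n (\<lambda>i. l i powr t) * transpose_mat Q) * h"
proof -
  obtain Q\<^sub>A l\<^sub>A where QA: "orthonormal_mat n Q\<^sub>A"
    and A_eq: "A = Q\<^sub>A * mat_diag n l\<^sub>A * transpose_mat Q\<^sub>A"
    using sym_mat_spectral_decomposition[OF A] by blast
  have QAc: "Q\<^sub>A \<in> carrier_mat n n" using QA by (rule orthonormal_mat_carrier)
  define h where "h = mat_powr A (1/2)"
  define g where "g = mat_powr A (-1/2)"
  have h: "h \<in> carrier_mat n n" "transpose_mat h = h"
    unfolding h_def A_eq mat_powr_conj_diag[OF QA] using QAc transpose_conj_diag[OF QAc] by auto
  have g: "g \<in> carrier_mat n n" "transpose_mat g = g"
    unfolding g_def A_eq mat_powr_conj_diag[OF QA] using QAc transpose_conj_diag[OF QAc] by auto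
  have "g * B * g \<in> carrier_mat n n" "transpose_mat (g * B * g) = g * B * g"
    using g B transpose_mult3[OF g(1) B(1) g(1)] by auto
  then obtain Q l where Q: "orthonormal_mat n Q" and C_eq: "g * B * g = Q * mat_diag n l * transpose_mat Q"
    using sym_mat_spectral_decomposition by blast
  have "geod A B t = h * (Q * mat_diag n (\<lambda>i. l i powr t) * transpose_mat Q) * h" for t
    unfolding geod_def h_def[symmetric] g_def[symmetric] C_eq mat_powr_conj_diag[OF Q] ..
  with h Q that show ?thesis by blast
qed

lemma ky_fan_trace_congruence:
  assumes h: "h \<in> carrier_mat n n" "transpose_mat h = h" and Q: "Q \<in> carrier_mat n n"
    and W: "W \<in> carrier_mat n n" and k: "k \<le> n"
  shows "ky_fan_trace k (h * (Q * mat_diag n g * transpose_mat Q) * h) W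
       = (\<Sum>i<k. \<Sum>j<n. ((transpose_mat Q * h * W) $$ (j,i))\<^sup>2 * g j)"
proof -
  define R where "R = transpose_mat Q * h * W"
  have R: "R \<in> carrier_mat n n" unfolding R_def using Q h W by simp
  have "transpose_mat R = transpose_mat W * h * Q"
    unfolding R_def using transpose_mult3[of "transpose_mat Q" n h W] Q h W by simp
  then have "transpose_mat W * (h * (Q * mat_diag n g * transpose_mat Q) * h) * W
      = transpose_mat R * mat_diag n g * R"
    unfolding R_def using Q h W
    by (simp add: assoc_mult_mat[of _ n n _ n _ n] mult_carrier_mat[of _ n n _ n])
  then show ?thesis
    unfolding ky_fan_trace_def R_def[symmetric] using k
    by (intro sum.cong refl) (simp add: congruence_diag_entry[OF R])
qed

lemma sum_eig_dec_congruence_powr: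
  fixes h Q :: "real mat" and l :: "nat \<Rightarrow> real"
  assumes h: "h \<in> carrier_mat n n" "transpose_mat h = h" and Q: "orthonormal_mat n Q" and k: "k \<le> n"
  defines "E \<equiv> \<lambda>t.
    \<Sum>j=1..k. eig_dec (h * (Q * mat_diag n (\<lambda>i. l i powr t) * transpose_mat Q) * h) j"
  shows "convex_on UNIV E" and "E t \<ge> 0"
proof -
  have Qc: "Q \<in> carrier_mat n n" using Q by (rule orthonormal_mat_carrier)
  let ?G = "\<lambda>t. h * (Q * mat_diag n (\<lambda>i. l i powr t) * transpose_mat Q) * h"
  have G: "?G t \<in> carrier_mat n n" "transpose_mat (?G t) = ?G t" for t
  proof -
    have "Q * mat_diag n (\<lambda>i. l i powr t) * transpose_mat Q \<in> carrier_mat n n" using Qc by auto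
    then show "?G t \<in> carrier_mat n n" "transpose_mat (?G t) = ?G t"
      using transpose_mult3[OF h(1) _ h(1)] transpose_conj_diag[OF Qc] h by auto
  qed
  note ky_fan = ky_fan_maximum_principle[OF G k]
  note trace = ky_fan_trace_congruence[OF h Qc _ k]
  show "convex_on UNIV E"
  proof (rule convex_on_attained_sup[where S = "{W. orthonormal_mat n W}"])
    show "convex_on UNIV (\<lambda>t. ky_fan_trace k (?G t) W)" if "W \<in> {W. orthonormal_mat n W}" for W
      unfolding trace[OF orthonormal_mat_carrier[OF that[simplified]]]
      by (intro convex_on_sum_fun convex_on_cmul convex_on_powr_exponent) auto
  qed (use ky_fan in \<open>auto simp: E_def\<close>)
  have "0 \<le> ky_fan_trace k (?G t) (1\<^sub>m n)"
    unfolding trace[OF one_carrier_mat] by (intro sum_nonneg mult_nonneg_nonneg) auto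
  also have "\<dots> \<le> E t" unfolding E_def using ky_fan(1) orthonormal_mat_one by blast
  finally show "E t \<ge> 0" .
qed

theorem mainTheorem2:
  fixes d k :: nat and p :: real
  assumes "1 \<le> k" and "k \<le> d" and "p \<ge> 1"
  shows "geod_convex d (\<lambda>X. \<bar>\<Sum>j=1..k. eig_dec X j\<bar> powr p)"
  unfolding geod_convex_def
proof (intro allI impI)
  fix A B assume "pd_mat d A" "pd_mat d B"
  then have A: "A \<in> carrier_mat d d" "transpose_mat A = A" and B: "B \<in> carrier_mat d d" "transpose_mat B = B"
    unfolding pd_mat_def by auto
  obtain h Q l where h: "h \<in> carrier_mat d d" "transpose_mat h = h" and Q: "orthonormal_mat d Q"
    and geod: "\<And>t. geod A B t = h * (Q * mat_diag d (\<lambda>i. l i powr t) * transpose_mat Q) * h"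
    using geod_conj_diag_powr[OF A B] by blast
  note E = sum_eig_dec_congruence_powr[OF h Q \<open>k \<le> d\<close>, of l]
  have "convex_on UNIV (\<lambda>t. (\<Sum>j=1..k. eig_dec (geod A B t) j) powr p)"
    unfolding geod
    by (rule convex_on_mono_comp[OF E(1) convex_on_powr_nonneg[OF \<open>p \<ge> 1\<close>]])
      (use E(2) \<open>p \<ge> 1\<close> in \<open>auto intro!: mono_onI powr_mono2\<close>)
  then show "convex_on {0..1} (\<lambda>t. \<bar>\<Sum>j=1..k. eig_dec (geod A B t) j\<bar> powr p)"
    unfolding geod using E(2) by (auto intro: convex_on_subset)
qed

end
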